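(* Consider the decoupled prover-verifier game described in the context, viewed as a verifier-leading Stackelberg game in which the verifier has utility $R_V$ and the pair of translators $(\tau,\tau')$ has utility $R_T$. Then: (i) if $(v^*,\tau^*,\tau'^* )$ is a verifier-leading Stackelberg equilibrium, then $\tau^*$ is faithful to $s$, i.e. $\mathbb{1}_{\text{faithful}}(s(x),\tau^*(s(x)))=1$ for all $x\in\mathcal X$, and the pair $(v^*,\tau^* )$ satisfies completeness and soundness; (ii) conversely, if $\tau^*$ is faithful to $s$ and $(v^*,\tau^* )$ satisfies completeness and soundness, then there exists a sneaky translator $\tau'^*$ such that $(v^*,\tau^*,\tau'^* )$ is a verifier-leading Stackelberg equilibrium. In short, being an equilibrium is necessary and sufficient for faithfulness of $\tau^*$ with respect to $s$ together with completeness and soundness of $(v^*,\tau^* )$.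
   Context: Let $\mathcal X$ be a set of problems, $\mathcal Y$ a set of answers, and $\mathcal Z$ a set of solutions, each solution containing reasoning and a final answer. Each problem $x$ has a ground-truth answer $y(x)\in\mathcal Y$. Problems are drawn from a distribution $P_X$ on $\mathcal X$ that gives positive probability to every $x\in\mathcal X$, so that expectations over $P_X$ detect every problem. Assume that for every $x$ there exist solutions in $\mathcal Z$ whose final answer differs from $y(x)$. For $x\in\mathcal X$ and $z\in\mathcal Z$, let $\mathbb{1}_{\text{correct}}(x,z)\in\{0,1\}$ equal $1$ exactly when the final answer of $z$ equals $y(x)$. For $z_1,z_2\in\mathcal Z$, let $\mathbb{1}_{\text{faithful}}(z_1,z_2)\in\{0,1\}$ equal $1$ exactly when the final answers of $z_1$ and $z_2$ coincide. A fixed solver $s:\mathcal X\to\mathcal Z$ is given; write $s=s(x)$ and $y=y(x)$. The players are: - a faithful translator $\tau$, mapping the solver output $s(x)$ (with $x$ implicit) to a solution $\tau(s)\in\mathcal Z$; - a sneaky translator $\tau'$, mapping $(s(x),y(x))$ to a solution $\tau'(s,y)\in\mathcal Z$; - a verifier $v:\mathcal X\times\mathcal Z\to[0,1]$. Let $l:[0,1]\times\{0,1\}\to\mathbb R$ be a loss function that, for each $c\in\{0,1\}$, is minimized in its first argument if and only if $v=c$, normalized so that $l(c,c)=0$ (for example, cross-entropy). Let $r:[0,1]\times\{0,1\}\to\mathbb R$ be a reward function such that: - $r(v_1,1)>r(v_2,0)$ for all $v_1,v_2\in[0,1]$; - $r(v_1,1)>r(v_2,1)$ whenever $v_1>v_2$.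 The verifier's utility is $$R_V=-\tfrac12\,\mathbb E_{x\sim P_X}\Big[l\big(v(x,\tau(s)),\mathbb{1}_{\text{correct}}(x,\tau(s))\big)+l\big(v(x,\tau'(s,y)),\mathbb{1}_{\text{correct}}(x,\tau'(s,y))\big)\Big].$$ The translators' utility is $$R_T=\tfrac12\,\mathbb E_{x\sim P_X}\Big[r\big(v(x,\tau(s)),\mathbb{1}_{\text{faithful}}(s,\tau(s))\big)+r\big(v(x,\tau'(s,y)),1-\mathbb{1}_{\text{correct}}(x,\tau'(s,y))\big)\Big].$$ A verifier-leading Stackelberg equilibrium is a triple $(v^*,\tau^*,\tau'^* )$ such that: - $(\tau^*,\tau'^* )$ maximizes $R_T$ given $v^*$; - $v^*$ maximizes $R_V$ under the assumption that the translators best-respond to it. The pair $(v,\tau)$ satisfies: - completeness if for all $x\in\mathcal X$, $\mathbb{1}_{\text{correct}}(x,\tau(s(x)))=1$ implies $v(x,\tau(s(x)))=1$; - soundness if for all $x\in\mathcal X$ and all $z'\in\mathcal Z$, $\mathbb{1}_{\text{correct}}(x,z')=0$ implies $v(x,z')=0$. *)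

theory Defs
  imports "HOL-Probability.Probability"
begin

definition expect :: "'a pmf \<Rightarrow> ('a \<Rightarrow> real) \<Rightarrow> ereal" where
  "expect P f =
     enn2ereal (\<integral>\<^sup>+ x. ennreal (f x) \<partial>measure_pmf P)
   - enn2ereal (\<integral>\<^sup>+ x. ennreal (- f x) \<partial>measure_pmf P)"

text \<open>ans z is the final answer of solution z; yv x the ground-truth answer.\<close>
definition correct :: "('z \<Rightarrow> 'y) \<Rightarrow> ('x \<Rightarrow> 'y) \<Rightarrow> 'x \<Rightarrow> 'z \<Rightarrow> bool" where
  "correct ans yv x z \<longleftrightarrow> ans z = yv x"

definition faithful :: "('z \<Rightarrow> 'y) \<Rightarrow> 'z \<Rightarrow> 'z \<Rightarrow> bool" where
  "faithful ans z1 z2 \<longleftrightarrow> ans z1 = ans z2"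

text \<open>Verifier utility. tau x (s x) is the faithful translator's output, tau' x (s x) (yv x)
  the sneaky translator's output (the problem x is implicitly available).\<close>
definition RV :: "'x pmf \<Rightarrow> (real \<Rightarrow> real \<Rightarrow> real) \<Rightarrow> ('z \<Rightarrow> 'y) \<Rightarrow> ('x \<Rightarrow> 'y) \<Rightarrow> ('x \<Rightarrow> 'z)
    \<Rightarrow> ('x \<Rightarrow> 'z \<Rightarrow> real) \<Rightarrow> ('x \<Rightarrow> 'z \<Rightarrow> 'z) \<Rightarrow> ('x \<Rightarrow> 'z \<Rightarrow> 'y \<Rightarrow> 'z) \<Rightarrow> ereal" where
  "RV P l ans yv s v tau tau' =
     - ereal (1/2) * expect P (\<lambda>x.
         l (v x (tau x (s x))) (of_bool (correct ans yv x (tau x (s x))))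
       + l (v x (tau' x (s x) (yv x))) (of_bool (correct ans yv x (tau' x (s x) (yv x)))))"

definition RT :: "'x pmf \<Rightarrow> (real \<Rightarrow> real \<Rightarrow> real) \<Rightarrow> ('z \<Rightarrow> 'y) \<Rightarrow> ('x \<Rightarrow> 'y) \<Rightarrow> ('x \<Rightarrow> 'z)
    \<Rightarrow> ('x \<Rightarrow> 'z \<Rightarrow> real) \<Rightarrow> ('x \<Rightarrow> 'z \<Rightarrow> 'z) \<Rightarrow> ('x \<Rightarrow> 'z \<Rightarrow> 'y \<Rightarrow> 'z) \<Rightarrow> ereal" where
  "RT P r ans yv s v tau tau' =
     ereal (1/2) * expect P (\<lambda>x.
         r (v x (tau x (s x))) (of_bool (faithful ans (s x) (tau x (s x))))
       + r (v x (tau' x (s x) (yv x))) (1 - of_bool (correct ans yv x (tau' x (s x) (yv x)))))"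

definition verifier :: "('x \<Rightarrow> 'z \<Rightarrow> real) \<Rightarrow> bool" where
  "verifier v \<longleftrightarrow> (\<forall>x z. v x z \<in> {0..1})"

definition best_response where
  "best_response P r ans yv s v tau tau' \<longleftrightarrow>
     (\<forall>\<sigma> \<sigma>'. RT P r ans yv s v \<sigma> \<sigma>' \<le> RT P r ans yv s v tau tau')"

definition stackelberg_eq where
  "stackelberg_eq P l r ans yv s v tau tau' \<longleftrightarrow>
     verifier v \<and> best_response P r ans yv s v tau tau' \<and>
     (\<forall>w \<sigma> \<sigma>'. verifier w \<and> best_response P r ans yv s w \<sigma> \<sigma>' \<longrightarrow>
        RV P l ans yv s w \<sigma> \<sigma>' \<le> RV P l ans yv s v tau tau')"

definition faithful_to where
  "faithful_to ans s tau \<longleftrightarrow> (\<forall>x. faithful ans (s x) (tau x (s x)))"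

definition completeness where
  "completeness ans yv s v tau \<longleftrightarrow>
     (\<forall>x. correct ans yv x (tau x (s x)) \<longrightarrow> v x (tau x (s x)) = 1)"

definition soundness where
  "soundness ans yv v \<longleftrightarrow> (\<forall>x z'. \<not> correct ans yv x z' \<longrightarrow> v x z' = 0)"

end

theory Submission
  imports Defs
begin

text \<open>The verifier's loss is nonnegative and vanishes exactly when each translator output is
  scored by its correctness. The oracle verifier, against the copying honest translator and a
  sneaky translator that always answers wrongly, attains loss 0, so an equilibrium verifier is
  exact on both translators' outputs. Since P charges every problem, a best response of the
  translators is optimal problem by problem: an unfaithful honest output could be replaced by the
  solver's own solution, and a wrong solution with positive score would be a better sneaky output,
  both for strictly more reward. Conversely, against a sound and complete verifier the faithful
  translator and the always-wrong sneaky translator are optimal at every problem and incur no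
  loss.\<close>

lemma expect_const: "expect P (\<lambda>_. c) = ereal c"
  unfolding expect_def
  by (cases "c \<ge> 0") (simp_all add: ennreal_neg zero_ennreal.rep_eq)

lemma expect_mono:
  assumes "\<And>x. f x \<le> g x"
  shows "expect P f \<le> expect P g"
  unfolding expect_def using assms
  by (intro ereal_minus_mono)
    (auto simp: less_eq_ennreal.rep_eq[symmetric] intro!: nn_integral_mono ennreal_leI)

lemma expect_nonneg_eq_0_iff:
  assumes nonneg: "\<And>x. 0 \<le> f x" and full_support: "\<And>x. 0 < pmf P x"
  shows "expect P f = 0 \<longleftrightarrow> (\<forall>x. f x = 0)"
proof
  assume "expect P f = 0"
  moreover have "(\<integral>\<^sup>+x. ennreal (- f x) \<partial>measure_pmf P) = 0"
    using nonneg by (simp add: ennreal_neg)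
  ultimately have "(\<integral>\<^sup>+x. ennreal (f x) \<partial>measure_pmf P) = 0"
    unfolding expect_def by (simp add: zero_ennreal.rep_eq flip: ennreal.enn2ereal_inject)
  then have "AE x in measure_pmf P. ennreal (f x) = 0"
    by (simp add: nn_integral_0_iff_AE)
  then show "\<forall>x. f x = 0"
    using full_support nonneg by (auto simp: AE_measure_pmf_iff set_pmf_iff order.strict_iff_order)
next
  assume "\<forall>x. f x = 0"
  then have "f = (\<lambda>_. 0)"
    by auto
  then show "expect P f = 0"
    by (simp add: expect_const zero_ereal_def)
qed

lemma expect_bounded_above_eq_integral:
  assumes bounded: "\<And>x. f x \<le> C" and finite: "expect P f \<noteq> -\<infinity>"
  shows "integrable P f" and "expect P f = ereal (\<integral>x. f x \<partial>P)"
proof -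
  have "(\<integral>\<^sup>+x. ennreal (f x) \<partial>P) \<le> (\<integral>\<^sup>+x. ennreal C \<partial>P)"
    using bounded by (intro nn_integral_mono ennreal_leI)
  then have pos_finite: "(\<integral>\<^sup>+x. ennreal (f x) \<partial>P) < \<infinity>"
    by (simp add: measure_pmf.emeasure_space_1 le_less_trans)
  moreover have "b < \<top>" if "a < \<top>" "enn2ereal a - enn2ereal b \<noteq> -\<infinity>" for a b :: ennreal
    using that
    by (metis enn2ereal_eq_top_iff ereal_minus(4) ereal_minus_diff_eq top.not_eq_extremum)
  ultimately have neg_finite: "(\<integral>\<^sup>+x. ennreal (- f x) \<partial>P) < \<infinity>"
    using finite unfolding expect_def by simp
  show "integrable P f"
    using pos_finite neg_finite by (auto simp: real_integrable_def)
  moreover have "enn2ereal a = ereal (enn2real a)" if "a < \<top>" for a :: ennreal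
    using that by (metis ennreal_enn2real enn2ereal_ennreal enn2real_nonneg)
  ultimately show "expect P f = ereal (\<integral>x. f x \<partial>P)"
    using pos_finite neg_finite unfolding expect_def real_lebesgue_integral_def[OF \<open>integrable P f\<close>]
    by simp
qed

lemma expect_strict_mono:
  assumes le: "\<And>x. f x \<le> g x" and bounded: "\<And>x. g x \<le> C"
    and less: "f a < g a" and charged: "0 < pmf P a" and finite: "expect P f \<noteq> -\<infinity>"
  shows "expect P f < expect P g"
proof -
  have f_bounded: "f x \<le> C" for x
    using le bounded order_trans by blast
  have "expect P f \<le> expect P g"
    using le by (rule expect_mono)
  then have g_finite: "expect P g \<noteq> -\<infinity>"
    using finite by auto
  note f = expect_bounded_above_eq_integral[OF f_bounded finite]
  note g = expect_bounded_above_eq_integral[OF bounded g_finite]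
  have indicator_int: "integrable P (\<lambda>x. (g a - f a) * indicator {a} x)"
    by (intro integrable_mult_right integrable_real_indicator) (auto simp: emeasure_pmf_single)
  have "0 < (g a - f a) * pmf P a"
    using less charged by simp
  also have "\<dots> = (\<integral>x. (g a - f a) * indicator {a} x \<partial>P)"
    by (simp add: measure_pmf_single)
  also have "\<dots> \<le> (\<integral>x. g x - f x \<partial>P)"
    using le by (intro integral_mono indicator_int Bochner_Integration.integrable_diff f g)
      (auto split: split_indicator)
  also have "\<dots> = (\<integral>x. g x \<partial>P) - (\<integral>x. f x \<partial>P)"
    using f g by simp
  finally show ?thesis
    using f g by simp
qed

locale prover_verifier_game =
  fixes P :: "'x pmf" and ans :: "'z \<Rightarrow> 'y" and yv :: "'x \<Rightarrow> 'y" and s :: "'x \<Rightarrow> 'z"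
    and l r :: "real \<Rightarrow> real \<Rightarrow> real"
  assumes full_support: "\<And>x. 0 < pmf P x"
    and wrong_exists: "\<And>x. \<exists>z. ans z \<noteq> yv x"
    and loss_min_iff: "\<And>c u. c \<in> {0,1} \<Longrightarrow> u \<in> {0..1} \<Longrightarrow> (\<forall>w\<in>{0..1}. l u c \<le> l w c) \<longleftrightarrow> u = c"
    and loss_diag: "\<And>c. c \<in> {0,1} \<Longrightarrow> l c c = 0"
    and reward_correct_gt: "\<And>u w. u \<in> {0..1} \<Longrightarrow> w \<in> {0..1} \<Longrightarrow> r u 0 < r w 1"
    and reward_strict_mono: "\<And>u w. u \<in> {0..1} \<Longrightarrow> w \<in> {0..1} \<Longrightarrow> u < w \<Longrightarrow> r u 1 < r w 1"
begin

lemma loss_nonneg: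
  assumes "u \<in> {0..1}" "c \<in> {0,1}"
  shows "0 \<le> l u c"
proof -
  have "\<forall>w\<in>{0..1}. l c c \<le> l w c"
    using loss_min_iff[of c c] assms(2) by auto
  then show ?thesis
    using assms loss_diag by auto
qed

lemma loss_eq_0_iff:
  assumes "u \<in> {0..1}" "c \<in> {0,1}"
  shows "l u c = 0 \<longleftrightarrow> u = c"
proof
  assume "l u c = 0"
  then have "\<forall>w\<in>{0..1}. l u c \<le> l w c"
    using loss_nonneg assms(2) by simp
  then show "u = c"
    using loss_min_iff[OF assms(2,1)] by blast
qed (use loss_diag assms(2) in simp)

lemma reward_le_max:
  assumes "u \<in> {0..1}" "c \<in> {0,1}"
  shows "r u c \<le> r 1 1"
  using assms reward_correct_gt[of u 1] reward_strict_mono[of u 1] by (cases "u = 1") auto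

lemma reward_min_le:
  assumes "u \<in> {0..1}"
  shows "r 0 1 \<le> r u 1"
  using assms reward_strict_mono[of 0 u] by (cases "u = 0") auto

definition verifier_loss :: "('x \<Rightarrow> 'z \<Rightarrow> real) \<Rightarrow> 'x \<Rightarrow> 'z \<Rightarrow> real" where
  "verifier_loss w x z = l (w x z) (of_bool (correct ans yv x z))"

definition honest_reward :: "('x \<Rightarrow> 'z \<Rightarrow> real) \<Rightarrow> ('x \<Rightarrow> 'z \<Rightarrow> 'z) \<Rightarrow> 'x \<Rightarrow> real" where
  "honest_reward w \<tau> x = r (w x (\<tau> x (s x))) (of_bool (faithful ans (s x) (\<tau> x (s x))))"

definition sneaky_reward :: "('x \<Rightarrow> 'z \<Rightarrow> real) \<Rightarrow> ('x \<Rightarrow> 'z \<Rightarrow> 'y \<Rightarrow> 'z) \<Rightarrow> 'x \<Rightarrow> real" where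
  "sneaky_reward w \<tau>' x =
     r (w x (\<tau>' x (s x) (yv x))) (1 - of_bool (correct ans yv x (\<tau>' x (s x) (yv x))))"

definition total_loss ::
    "('x \<Rightarrow> 'z \<Rightarrow> real) \<Rightarrow> ('x \<Rightarrow> 'z \<Rightarrow> 'z) \<Rightarrow> ('x \<Rightarrow> 'z \<Rightarrow> 'y \<Rightarrow> 'z) \<Rightarrow> 'x \<Rightarrow> real" where
  "total_loss w \<tau> \<tau>' x = verifier_loss w x (\<tau> x (s x)) + verifier_loss w x (\<tau>' x (s x) (yv x))"

definition total_reward ::
    "('x \<Rightarrow> 'z \<Rightarrow> real) \<Rightarrow> ('x \<Rightarrow> 'z \<Rightarrow> 'z) \<Rightarrow> ('x \<Rightarrow> 'z \<Rightarrow> 'y \<Rightarrow> 'z) \<Rightarrow> 'x \<Rightarrow> real" where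
  "total_reward w \<tau> \<tau>' x = honest_reward w \<tau> x + sneaky_reward w \<tau>' x"

lemma RV_eq: "RV P l ans yv s w \<tau> \<tau>' = - ereal (1/2) * expect P (total_loss w \<tau> \<tau>')"
  by (simp add: RV_def total_loss_def[abs_def] verifier_loss_def)

lemma RT_eq: "RT P r ans yv s w \<tau> \<tau>' = ereal (1/2) * expect P (total_reward w \<tau> \<tau>')"
  by (simp add: RT_def total_reward_def[abs_def] honest_reward_def sneaky_reward_def)

lemma RT_le_iff:
  "RT P r ans yv s w \<sigma> \<sigma>' \<le> RT P r ans yv s w \<tau> \<tau>' \<longleftrightarrow>
     expect P (total_reward w \<sigma> \<sigma>') \<le> expect P (total_reward w \<tau> \<tau>')"
  unfolding RT_eq
  by (cases "expect P (total_reward w \<sigma> \<sigma>')"; cases "expect P (total_reward w \<tau> \<tau>')") auto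

lemma verifier_loss_nonneg: "verifier w \<Longrightarrow> 0 \<le> verifier_loss w x z"
  by (simp add: verifier_loss_def verifier_def loss_nonneg)

lemma verifier_loss_eq_0_iff:
  "verifier w \<Longrightarrow> verifier_loss w x z = 0 \<longleftrightarrow> w x z = of_bool (correct ans yv x z)"
  by (simp add: verifier_loss_def verifier_def loss_eq_0_iff)

lemma total_loss_nonneg: "verifier w \<Longrightarrow> 0 \<le> total_loss w \<tau> \<tau>' x"
  by (simp add: total_loss_def verifier_loss_nonneg)

lemma RV_le_0:
  assumes "verifier w"
  shows "RV P l ans yv s w \<tau> \<tau>' \<le> 0"
proof -
  have "expect P (\<lambda>_. 0) \<le> expect P (total_loss w \<tau> \<tau>')"
    using assms by (intro expect_mono total_loss_nonneg)
  then show ?thesis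
    unfolding RV_eq expect_const by (cases "expect P (total_loss w \<tau> \<tau>')") auto
qed

lemma RV_eq_0_iff:
  assumes "verifier w"
  shows "RV P l ans yv s w \<tau> \<tau>' = 0 \<longleftrightarrow>
    (\<forall>x. w x (\<tau> x (s x)) = of_bool (correct ans yv x (\<tau> x (s x)))
       \<and> w x (\<tau>' x (s x) (yv x)) = of_bool (correct ans yv x (\<tau>' x (s x) (yv x))))"
    (is "_ \<longleftrightarrow> ?exact")
proof -
  have "RV P l ans yv s w \<tau> \<tau>' = 0 \<longleftrightarrow> expect P (total_loss w \<tau> \<tau>') = 0"
    unfolding RV_eq by (cases "expect P (total_loss w \<tau> \<tau>')") auto
  also have "\<dots> \<longleftrightarrow> (\<forall>x. total_loss w \<tau> \<tau>' x = 0)"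
    using assms by (intro expect_nonneg_eq_0_iff full_support total_loss_nonneg)
  also have "\<dots> \<longleftrightarrow> ?exact"
    using assms
    by (simp add: total_loss_def add_nonneg_eq_0_iff verifier_loss_nonneg verifier_loss_eq_0_iff)
  finally show ?thesis .
qed

definition wrong_answer :: "'x \<Rightarrow> 'z" where
  "wrong_answer x = (SOME z. ans z \<noteq> yv x)"

lemma ans_wrong_answer: "ans (wrong_answer x) \<noteq> yv x"
  unfolding wrong_answer_def using wrong_exists by (rule someI_ex)

definition copy_translator :: "'x \<Rightarrow> 'z \<Rightarrow> 'z" where
  "copy_translator x z = z"

definition lying_translator :: "'x \<Rightarrow> 'z \<Rightarrow> 'y \<Rightarrow> 'z" where
  "lying_translator x z y = wrong_answer x"

lemma total_reward_le_max:
  assumes "verifier w"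
  shows "total_reward w \<tau> \<tau>' x \<le> 2 * r 1 1"
proof -
  have "honest_reward w \<tau> x \<le> r 1 1" and "sneaky_reward w \<tau>' x \<le> r 1 1"
    using assms by (simp_all add: honest_reward_def sneaky_reward_def verifier_def reward_le_max)
  then show ?thesis
    by (simp add: total_reward_def)
qed

lemma honest_reward_copy_translator: "verifier w \<Longrightarrow> r 0 1 \<le> honest_reward w copy_translator x"
  by (simp add: honest_reward_def copy_translator_def faithful_def verifier_def reward_min_le)

lemma sneaky_reward_lying_translator: "verifier w \<Longrightarrow> r 0 1 \<le> sneaky_reward w lying_translator x"
  using ans_wrong_answer
  by (simp add: sneaky_reward_def lying_translator_def correct_def verifier_def reward_min_le)

text \<open>The rewards r u 0 need not be bounded below; finiteness comes from comparison with the
  copying and lying translators, whose rewards are at least r 0 1.\<close>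
lemma best_response_reward_finite:
  assumes "verifier w" and "best_response P r ans yv s w \<tau> \<tau>'"
  shows "expect P (total_reward w \<tau> \<tau>') \<noteq> -\<infinity>"
proof -
  have "ereal (2 * r 0 1) = expect P (\<lambda>_. r 0 1 + r 0 1)"
    by (simp add: expect_const)
  also have "\<dots> \<le> expect P (total_reward w copy_translator lying_translator)"
    unfolding total_reward_def using assms(1)
    by (intro expect_mono add_mono honest_reward_copy_translator sneaky_reward_lying_translator)
  also have "\<dots> \<le> expect P (total_reward w \<tau> \<tau>')"
    using assms(2) unfolding best_response_def RT_le_iff by blast
  finally show ?thesis
    by auto
qed

text \<open>Since P charges every problem, a gain at a single problem raises the expected reward.\<close>
lemma best_response_locally_optimal:
  assumes w: "verifier w" and best: "best_response P r ans yv s w \<tau> \<tau>'"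
    and elsewhere: "\<And>x. x \<noteq> a \<Longrightarrow> total_reward w \<sigma> \<sigma>' x = total_reward w \<tau> \<tau>' x"
  shows "total_reward w \<sigma> \<sigma>' a \<le> total_reward w \<tau> \<tau>' a"
proof (rule ccontr)
  assume gain: "\<not> total_reward w \<sigma> \<sigma>' a \<le> total_reward w \<tau> \<tau>' a"
  have "expect P (total_reward w \<tau> \<tau>') < expect P (total_reward w \<sigma> \<sigma>')"
  proof (rule expect_strict_mono[where a = a])
    show "total_reward w \<tau> \<tau>' x \<le> total_reward w \<sigma> \<sigma>' x" for x
      using gain elsewhere[of x] by (cases "x = a") auto
  qed (use gain total_reward_le_max[OF w] full_support best_response_reward_finite[OF w best]
      in auto)
  then show False
    using best by (auto simp: best_response_def RT_le_iff not_le[symmetric])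
qed

lemma best_response_iff_pointwise:
  assumes w: "verifier w"
  shows "best_response P r ans yv s w \<tau> \<tau>' \<longleftrightarrow>
    (\<forall>\<sigma> x. honest_reward w \<sigma> x \<le> honest_reward w \<tau> x)
    \<and> (\<forall>\<sigma>' x. sneaky_reward w \<sigma>' x \<le> sneaky_reward w \<tau>' x)"
proof
  assume best: "best_response P r ans yv s w \<tau> \<tau>'"
  show "(\<forall>\<sigma> x. honest_reward w \<sigma> x \<le> honest_reward w \<tau> x)
    \<and> (\<forall>\<sigma>' x. sneaky_reward w \<sigma>' x \<le> sneaky_reward w \<tau>' x)"
  proof (intro conjI allI)
    fix \<sigma> x
    show "honest_reward w \<sigma> x \<le> honest_reward w \<tau> x"
      using best_response_locally_optimal[OF w best, of x "\<tau>(x := \<sigma> x)" \<tau>']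
      by (simp add: total_reward_def honest_reward_def)
  next
    fix \<sigma>' x
    show "sneaky_reward w \<sigma>' x \<le> sneaky_reward w \<tau>' x"
      using best_response_locally_optimal[OF w best, of x \<tau> "\<tau>'(x := \<sigma>' x)"]
      by (simp add: total_reward_def sneaky_reward_def)
  qed
next
  assume "(\<forall>\<sigma> x. honest_reward w \<sigma> x \<le> honest_reward w \<tau> x)
    \<and> (\<forall>\<sigma>' x. sneaky_reward w \<sigma>' x \<le> sneaky_reward w \<tau>' x)"
  then show "best_response P r ans yv s w \<tau> \<tau>'"
    unfolding best_response_def RT_le_iff total_reward_def by (blast intro: expect_mono add_mono)
qed

lemma sound_complete_faithful_imp_best_response:
  assumes v: "verifier v" and faithful: "faithful_to ans s \<tau>"
    and complete: "completeness ans yv s v \<tau>" and sound: "soundness ans yv v"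
  shows "best_response P r ans yv s v \<tau> lying_translator"
  unfolding best_response_iff_pointwise[OF v]
proof (intro conjI allI)
  fix \<sigma> x
  have v01: "v x z \<in> {0..1}" for z
    using v by (simp add: verifier_def)
  have same_answer: "ans (\<tau> x (s x)) = ans (s x)"
    using faithful by (simp add: faithful_to_def faithful_def)
  show "honest_reward v \<sigma> x \<le> honest_reward v \<tau> x"
  proof (cases "faithful ans (s x) (\<sigma> x (s x))")
    case True
    then have "correct ans yv x (\<sigma> x (s x)) = correct ans yv x (\<tau> x (s x))"
      using same_answer by (simp add: faithful_def correct_def)
    then show ?thesis
      using True same_answer complete sound reward_le_max[OF v01]
      by (cases "correct ans yv x (\<tau> x (s x))")
        (auto simp: honest_reward_def faithful_def completeness_def soundness_def)
  next
    case False
    then show ?thesis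
      using same_answer less_imp_le[OF reward_correct_gt[OF v01 v01]]
      by (simp add: honest_reward_def faithful_def)
  qed
next
  fix \<sigma>' x
  have "v x (wrong_answer x) = 0"
    using sound ans_wrong_answer by (simp add: soundness_def correct_def)
  then have lying: "sneaky_reward v lying_translator x = r 0 1"
    using ans_wrong_answer by (simp add: sneaky_reward_def lying_translator_def correct_def)
  show "sneaky_reward v \<sigma>' x \<le> sneaky_reward v lying_translator x"
  proof (cases "correct ans yv x (\<sigma>' x (s x) (yv x))")
    case True
    have "v x z \<in> {0..1}" for z
      using v by (simp add: verifier_def)
    then show ?thesis
      using True lying less_imp_le[OF reward_correct_gt] by (simp add: sneaky_reward_def)
  next
    case False
    then show ?thesis
      using lying sound by (simp add: sneaky_reward_def soundness_def)
  qed
qed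

lemma sound_complete_imp_RV_lying_eq_0:
  assumes v: "verifier v" and complete: "completeness ans yv s v \<tau>" and sound: "soundness ans yv v"
  shows "RV P l ans yv s v \<tau> lying_translator = 0"
proof -
  have "v x (\<tau> x (s x)) = of_bool (correct ans yv x (\<tau> x (s x)))" for x
    using complete sound by (auto simp: completeness_def soundness_def)
  moreover have "v x (wrong_answer x) = 0" for x
    using sound ans_wrong_answer by (simp add: soundness_def correct_def)
  ultimately show ?thesis
    using v ans_wrong_answer by (simp add: RV_eq_0_iff lying_translator_def correct_def)
qed

lemma sound_complete_faithful_imp_stackelberg_eq:
  assumes "verifier v" "faithful_to ans s \<tau>" "completeness ans yv s v \<tau>" "soundness ans yv v"
  shows "stackelberg_eq P l r ans yv s v \<tau> lying_translator"
  using assms sound_complete_faithful_imp_best_response sound_complete_imp_RV_lying_eq_0 RV_le_0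
  by (simp add: stackelberg_eq_def)

definition oracle_verifier :: "'x \<Rightarrow> 'z \<Rightarrow> real" where
  "oracle_verifier x z = of_bool (correct ans yv x z)"

lemma verifier_oracle_verifier: "verifier oracle_verifier"
  by (simp add: verifier_def oracle_verifier_def)

lemma completeness_oracle_verifier: "completeness ans yv s oracle_verifier \<tau>"
  by (simp add: completeness_def oracle_verifier_def)

lemma soundness_oracle_verifier: "soundness ans yv oracle_verifier"
  by (simp add: soundness_def oracle_verifier_def)

lemma faithful_to_copy_translator: "faithful_to ans s copy_translator"
  by (simp add: faithful_to_def faithful_def copy_translator_def)

text \<open>The oracle verifier attains the maximal utility 0, so at an equilibrium all losses
  vanish.\<close>
lemma stackelberg_eq_imp_exact:
  assumes eq: "stackelberg_eq P l r ans yv s v \<tau> \<tau>'"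
  shows "v x (\<tau> x (s x)) = of_bool (correct ans yv x (\<tau> x (s x)))"
    and "v x (\<tau>' x (s x) (yv x)) = of_bool (correct ans yv x (\<tau>' x (s x) (yv x)))"
proof -
  have v: "verifier v"
    using eq by (simp add: stackelberg_eq_def)
  have "best_response P r ans yv s oracle_verifier copy_translator lying_translator"
    by (intro sound_complete_faithful_imp_best_response verifier_oracle_verifier
        faithful_to_copy_translator completeness_oracle_verifier soundness_oracle_verifier)
  then have "RV P l ans yv s oracle_verifier copy_translator lying_translator
      \<le> RV P l ans yv s v \<tau> \<tau>'"
    using eq verifier_oracle_verifier by (simp add: stackelberg_eq_def)
  moreover have "RV P l ans yv s oracle_verifier copy_translator lying_translator = 0"
    by (intro sound_complete_imp_RV_lying_eq_0 verifier_oracle_verifier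
        completeness_oracle_verifier soundness_oracle_verifier)
  ultimately have "RV P l ans yv s v \<tau> \<tau>' = 0"
    using RV_le_0[OF v] by (simp add: order.antisym)
  then show "v x (\<tau> x (s x)) = of_bool (correct ans yv x (\<tau> x (s x)))"
    and "v x (\<tau>' x (s x) (yv x)) = of_bool (correct ans yv x (\<tau>' x (s x) (yv x)))"
    using RV_eq_0_iff[OF v] by auto
qed

lemma stackelberg_eq_imp_completeness:
  assumes "stackelberg_eq P l r ans yv s v \<tau> \<tau>'"
  shows "completeness ans yv s v \<tau>"
  using stackelberg_eq_imp_exact(1)[OF assms] by (simp add: completeness_def)

lemma stackelberg_eq_imp_faithful_to:
  assumes eq: "stackelberg_eq P l r ans yv s v \<tau> \<tau>'"
  shows "faithful_to ans s \<tau>"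
  unfolding faithful_to_def
proof (rule allI, rule ccontr)
  fix x
  assume unfaithful: "\<not> faithful ans (s x) (\<tau> x (s x))"
  have v: "verifier v" and best: "best_response P r ans yv s v \<tau> \<tau>'"
    using eq by (simp_all add: stackelberg_eq_def)
  then have "honest_reward v copy_translator x \<le> honest_reward v \<tau> x"
    by (simp add: best_response_iff_pointwise)
  moreover have "honest_reward v \<tau> x < honest_reward v copy_translator x"
    using unfaithful v reward_correct_gt
    by (simp add: honest_reward_def copy_translator_def faithful_def verifier_def)
  ultimately show False
    by simp
qed

text \<open>A wrong solution with positive score would earn the sneaky translator more than the
  equilibrium output, on which the verifier is exact.\<close>
lemma stackelberg_eq_imp_soundness:
  assumes eq: "stackelberg_eq P l r ans yv s v \<tau> \<tau>'"
  shows "soundness ans yv v"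
  unfolding soundness_def
proof (intro allI impI)
  fix x z
  assume wrong: "\<not> correct ans yv x z"
  have v: "verifier v" and best: "best_response P r ans yv s v \<tau> \<tau>'"
    using eq by (simp_all add: stackelberg_eq_def)
  have v01: "v x z' \<in> {0..1}" for z'
    using v by (simp add: verifier_def)
  have "sneaky_reward v (\<lambda>_ _ _. z) x \<le> sneaky_reward v \<tau>' x"
    using v best by (simp add: best_response_iff_pointwise)
  then have le: "r (v x z) 1 \<le> sneaky_reward v \<tau>' x"
    using wrong by (simp add: sneaky_reward_def)
  show "v x z = 0"
  proof (cases "correct ans yv x (\<tau>' x (s x) (yv x))")
    case True
    then show ?thesis
      using le stackelberg_eq_imp_exact(2)[OF eq, of x] reward_correct_gt[OF _ v01, of 1 z]
      by (simp add: sneaky_reward_def)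
  next
    case False
    then have "r (v x z) 1 \<le> r 0 1"
      using le stackelberg_eq_imp_exact(2)[OF eq, of x] by (simp add: sneaky_reward_def)
    then show ?thesis
      using v01[of z] reward_strict_mono[of 0 "v x z"] by fastforce
  qed
qed

end

theorem theorem1:
  fixes P :: "'x pmf" and ans :: "'z \<Rightarrow> 'y" and yv :: "'x \<Rightarrow> 'y" and s :: "'x \<Rightarrow> 'z"
    and l r :: "real \<Rightarrow> real \<Rightarrow> real"
  assumes P_pos: "\<forall>x. pmf P x > 0"
    and wrong_exists: "\<forall>x. \<exists>z. ans z \<noteq> yv x"
    and l_min: "\<forall>c\<in>{0,1}. \<forall>u\<in>{0..1}. (\<forall>w\<in>{0..1}. l u c \<le> l w c) \<longleftrightarrow> u = c"
    and l_norm: "\<forall>c\<in>{0,1}. l c c = 0"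
    and r_correct: "\<forall>v1\<in>{0..1}. \<forall>v2\<in>{0..1}. r v1 1 > r v2 0"
    and r_mono: "\<forall>v1\<in>{0..1}. \<forall>v2\<in>{0..1}. v1 > v2 \<longrightarrow> r v1 1 > r v2 1"
  shows "(\<forall>v tau tau'. stackelberg_eq P l r ans yv s v tau tau' \<longrightarrow>
            faithful_to ans s tau \<and> completeness ans yv s v tau \<and> soundness ans yv v)
       \<and> (\<forall>v tau. verifier v \<and> faithful_to ans s tau \<and> completeness ans yv s v tau
                   \<and> soundness ans yv v \<longrightarrow>
            (\<exists>tau'. stackelberg_eq P l r ans yv s v tau tau'))"
proof -
  interpret prover_verifier_game P ans yv s l r
    by unfold_locales (use assms in auto)
  show ?thesis
    using stackelberg_eq_imp_faithful_to stackelberg_eq_imp_completeness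
      stackelberg_eq_imp_soundness sound_complete_faithful_imp_stackelberg_eq by blast
qed

end
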